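(* Let $\Delta\ge1$, $\beta\ge0$, $\eta\in[0,1)$, and let $G$ be a finite graph of maximum degree at most $\Delta$. If $\lambda>0$ is such that $\eta_G(\beta,\lambda)=\eta$, then \[1\le\lambda\le\sqrt{\frac{1+\eta}{1-\eta}}\,e^{\beta\Delta/2}.\]
   Context: The Ising model on $G$ at inverse temperature $\beta$ and activity $\lambda>0$ is $\mu_{G,\beta,\lambda}(\sigma)\propto e^{\frac{\beta}{2}\sum_{uv\in E(G)}\sigma_u\sigma_v}\lambda^{M(\sigma)}$ on $\{\pm1\}^{V(G)}$ with $M(\sigma)=\sum_v\sigma_v$; the mean magnetization is $\eta_G(\beta,\lambda)=\mathbb{E}_{\mu_{G,\beta,\lambda}}[M(\sigma)]/|V(G)|$. *)

theory Defs
  imports "HOL-Library.FuncSet" Complex_Main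
begin

definition simple_graph :: "'a set \<Rightarrow> ('a \<Rightarrow> 'a \<Rightarrow> bool) \<Rightarrow> bool" where
  "simple_graph V E \<longleftrightarrow> finite V \<and> (\<forall>u v. E u v \<longrightarrow> u \<in> V \<and> v \<in> V)
     \<and> (\<forall>u v. E u v \<longrightarrow> E v u) \<and> (\<forall>u. \<not> E u u)"

definition degree :: "'a set \<Rightarrow> ('a \<Rightarrow> 'a \<Rightarrow> bool) \<Rightarrow> 'a \<Rightarrow> nat" where
  "degree V E v = card {u \<in> V. E v u}"

definition max_degree_le :: "'a set \<Rightarrow> ('a \<Rightarrow> 'a \<Rightarrow> bool) \<Rightarrow> nat \<Rightarrow> bool" where
  "max_degree_le V E \<Delta> \<longleftrightarrow> (\<forall>v \<in> V. degree V E v \<le> \<Delta>)"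

definition spins :: "'a set \<Rightarrow> ('a \<Rightarrow> real) set" where
  "spins V = PiE V (\<lambda>_. {-1, 1})"

text \<open>Sum over (unordered) edges uv of \<sigma>_u \<sigma>_v: each edge appears twice among ordered pairs.\<close>
definition edge_sum :: "'a set \<Rightarrow> ('a \<Rightarrow> 'a \<Rightarrow> bool) \<Rightarrow> ('a \<Rightarrow> real) \<Rightarrow> real" where
  "edge_sum V E \<sigma> = (\<Sum>p \<in> {(u, v) \<in> V \<times> V. E u v}. \<sigma> (fst p) * \<sigma> (snd p)) / 2"

definition magnetization :: "'a set \<Rightarrow> ('a \<Rightarrow> real) \<Rightarrow> real" where
  "magnetization V \<sigma> = (\<Sum>v \<in> V. \<sigma> v)"

definition ising_weight :: "'a set \<Rightarrow> ('a \<Rightarrow> 'a \<Rightarrow> bool) \<Rightarrow> real \<Rightarrow> real \<Rightarrow> ('a \<Rightarrow> real) \<Rightarrow> real" where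
  "ising_weight V E \<beta> lam \<sigma> = exp (\<beta> / 2 * edge_sum V E \<sigma>) * lam powr magnetization V \<sigma>"

definition partition_fn :: "'a set \<Rightarrow> ('a \<Rightarrow> 'a \<Rightarrow> bool) \<Rightarrow> real \<Rightarrow> real \<Rightarrow> real" where
  "partition_fn V E \<beta> lam = (\<Sum>\<sigma> \<in> spins V. ising_weight V E \<beta> lam \<sigma>)"

definition mean_magnetization :: "'a set \<Rightarrow> ('a \<Rightarrow> 'a \<Rightarrow> bool) \<Rightarrow> real \<Rightarrow> real \<Rightarrow> real" where
  "mean_magnetization V E \<beta> lam =
     ((\<Sum>\<sigma> \<in> spins V. magnetization V \<sigma> * ising_weight V E \<beta> lam \<sigma>) / partition_fn V E \<beta> lam)
     / real (card V)"

end

theory Submission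
  imports Defs
begin

text \<open>
  Lower bound: the global flip \<sigma> \<mapsto> -\<sigma> preserves the interaction and negates M, so
  twice the unnormalised mean magnetization equals the sum over \<sigma> of
  exp(\<beta>/2 \<cdot> edge_sum \<sigma>) \<cdot> M(\<sigma>) (\<lambda>^M(\<sigma>) - \<lambda>^-M(\<sigma>)), which is negative when \<lambda> < 1.

  Upper bound: flipping the spin at v from +1 to -1 changes the interaction energy by at
  most \<beta>\<Delta> and the field term by the factor \<lambda>^2, so w(\<sigma>) \<ge> r w(\<sigma>') with
  r = \<lambda>^2 exp(-\<beta>\<Delta>). Pairing each configuration with its flip at v gives
  (r - 1) Z \<le> (r + 1) Z \<langle>\<sigma>_v\<rangle>, and averaging over v yields r - 1 \<le> (r + 1) \<eta>.
\<close>

lemma sum_reindex_involution: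
  assumes "\<And>x. x \<in> S \<Longrightarrow> h x \<in> S" and "\<And>x. x \<in> S \<Longrightarrow> h (h x) = x"
  shows "sum f S = (\<Sum>x\<in>S. f (h x))"
  by (rule sum.reindex_bij_witness[of S h h]) (auto simp: assms)

lemma sum_involution_pairing_le:
  fixes w s :: "'a \<Rightarrow> real"
  assumes h_in: "\<And>x. x \<in> S \<Longrightarrow> h x \<in> S" and h_h: "\<And>x. x \<in> S \<Longrightarrow> h (h x) = x"
    and s_sign: "\<And>x. x \<in> S \<Longrightarrow> s x = 1 \<or> s x = -1"
    and s_h: "\<And>x. x \<in> S \<Longrightarrow> s (h x) = - s x"
    and ratio: "\<And>x. x \<in> S \<Longrightarrow> s x = 1 \<Longrightarrow> r * w (h x) \<le> w x"
  shows "(r - 1) * sum w S \<le> (r + 1) * (\<Sum>x\<in>S. s x * w x)"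
proof -
  have pair: "(r - 1) * (w x + w (h x)) \<le> (r + 1) * (s x * w x + s (h x) * w (h x))"
    if x: "x \<in> S" for x
    using s_sign[OF x]
  proof
    assume "s x = 1"
    with ratio[OF x] s_h[OF x] show ?thesis by (simp add: algebra_simps)
  next
    assume "s x = -1"
    with ratio[OF h_in[OF x]] s_h[OF x] h_h[OF x] show ?thesis by (simp add: algebra_simps)
  qed
  have "2 * ((r - 1) * sum w S) = (r - 1) * (sum w S + (\<Sum>x\<in>S. w (h x)))"
    using sum_reindex_involution[OF h_in h_h, of w] by simp
  also have "\<dots> = (\<Sum>x\<in>S. (r - 1) * (w x + w (h x)))"
    by (simp only: sum.distrib[symmetric] sum_distrib_left)
  also have "\<dots> \<le> (\<Sum>x\<in>S. (r + 1) * (s x * w x + s (h x) * w (h x)))"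
    by (rule sum_mono) (rule pair)
  also have "\<dots> = (r + 1) * ((\<Sum>x\<in>S. s x * w x) + (\<Sum>x\<in>S. s (h x) * w (h x)))"
    by (simp only: sum.distrib[symmetric] sum_distrib_left)
  also have "\<dots> = 2 * ((r + 1) * (\<Sum>x\<in>S. s x * w x))"
    using sum_reindex_involution[OF h_in h_h, of "\<lambda>x. s x * w x"] by simp
  finally show ?thesis by simp
qed

lemma mult_powr_diff_neg:
  fixes lam m :: real
  assumes "0 < lam" and "lam < 1" and "m \<noteq> 0"
  shows "m * (lam powr m - lam powr (- m)) < 0"
proof (cases "m > 0")
  case True
  then have "lam powr m < 1" and "\<not> lam powr (- m) < 1"
    using powr01_less_one[OF assms(1,2)] by auto
  with True show ?thesis by (simp add: mult_pos_neg)
next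
  case False
  with assms(3) have "lam powr (- m) < 1" and "\<not> lam powr m < 1"
    using powr01_less_one[OF assms(1,2)] by auto
  with False assms(3) show ?thesis by (simp add: mult_neg_pos)
qed

lemma spins_values:
  assumes "\<sigma> \<in> spins V" and "v \<in> V"
  shows "\<sigma> v = 1 \<or> \<sigma> v = -1"
  using assms unfolding spins_def by (auto simp: PiE_iff)

lemma spins_fun_upd_flip:
  assumes "\<sigma> \<in> spins V" and "v \<in> V"
  shows "\<sigma>(v := - \<sigma> v) \<in> spins V"
  using assms unfolding spins_def by (auto simp: PiE_iff extensional_def)

lemma spins_restrict_uminus:
  assumes "\<sigma> \<in> spins V"
  shows "restrict (\<lambda>u. - \<sigma> u) V \<in> spins V"
    and "restrict (\<lambda>u. - restrict (\<lambda>u. - \<sigma> u) V u) V = \<sigma>"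
  using assms unfolding spins_def by (auto simp: PiE_iff fun_eq_iff extensional_def)

lemma restrict_one_in_spins: "restrict (\<lambda>_. 1) V \<in> spins V"
  unfolding spins_def by auto

lemma finite_spins: "finite V \<Longrightarrow> finite (spins V)"
  unfolding spins_def by (simp add: finite_PiE)

lemma edge_sum_restrict_uminus: "edge_sum V E (restrict (\<lambda>u. - \<sigma> u) V) = edge_sum V E \<sigma>"
  unfolding edge_sum_def by (intro arg_cong[where f = "\<lambda>x. x / 2"] sum.cong) auto

lemma magnetization_restrict_uminus:
  "magnetization V (restrict (\<lambda>u. - \<sigma> u) V) = - magnetization V \<sigma>"
  unfolding magnetization_def by (simp add: sum_negf)

lemma magnetization_fun_upd_diff:
  assumes "finite V" and "v \<in> V"
  shows "magnetization V (\<sigma>(v := a)) - magnetization V (\<sigma>(v := b)) = a - b"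
  using assms unfolding magnetization_def by (simp add: sum.remove)

lemma edge_sum_fun_upd_diff:
  assumes G: "simple_graph V E" and v: "v \<in> V"
  shows "edge_sum V E (\<sigma>(v := a)) - edge_sum V E (\<sigma>(v := b))
       = (a - b) * (\<Sum>u\<in>{u \<in> V. E v u}. \<sigma> u)"
proof -
  define P where "P = {(u, w) \<in> V \<times> V. E u w}"
  define g where "g = (\<lambda>p. if fst p = v then \<sigma> (snd p) else 0)"
  have irrefl: "\<And>u. \<not> E u u" and sym: "\<And>u w. E u w \<Longrightarrow> E w u"
    using G by (auto simp: simple_graph_def)
  have "finite P"
    using G unfolding P_def simple_graph_def by (auto intro: finite_subset[of _ "V \<times> V"])
  have term_diff: "(\<sigma>(v := a)) (fst p) * (\<sigma>(v := a)) (snd p)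
      - (\<sigma>(v := b)) (fst p) * (\<sigma>(v := b)) (snd p) = (a - b) * (g p + g (prod.swap p))"
    if "p \<in> P" for p
    using that irrefl unfolding P_def g_def by (cases p) (auto simp: algebra_simps)
  have g_swap: "(\<Sum>p\<in>P. g (prod.swap p)) = sum g P"
    by (rule sum_reindex_involution[symmetric]) (auto simp: P_def sym)
  have "sum g P = (\<Sum>p\<in>{p \<in> P. fst p = v}. \<sigma> (snd p))"
    using \<open>finite P\<close> unfolding g_def by (simp add: sum.inter_filter)
  also have "{p \<in> P. fst p = v} = Pair v ` {u \<in> V. E v u}"
    unfolding P_def using v by auto
  also have "(\<Sum>p\<in>Pair v ` {u \<in> V. E v u}. \<sigma> (snd p)) = (\<Sum>u\<in>{u \<in> V. E v u}. \<sigma> u)"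
    by (subst sum.reindex) (auto simp: inj_on_def)
  finally have g_sum: "sum g P = (\<Sum>u\<in>{u \<in> V. E v u}. \<sigma> u)" .
  have "edge_sum V E (\<sigma>(v := a)) - edge_sum V E (\<sigma>(v := b))
      = (\<Sum>p\<in>P. (a - b) * (g p + g (prod.swap p))) / 2"
    unfolding edge_sum_def P_def[symmetric] diff_divide_distrib[symmetric] sum_subtractf[symmetric]
    using term_diff by (simp cong: sum.cong)
  also have "\<dots> = (a - b) * (\<Sum>u\<in>{u \<in> V. E v u}. \<sigma> u)"
    by (simp add: sum_distrib_left[symmetric] sum.distrib g_swap g_sum)
  finally show ?thesis .
qed

lemma abs_sum_neighbour_spins_le:
  assumes "max_degree_le V E \<Delta>" and "\<sigma> \<in> spins V" and "v \<in> V"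
  shows "\<bar>\<Sum>u\<in>{u \<in> V. E v u}. \<sigma> u\<bar> \<le> real \<Delta>"
proof -
  have "\<bar>\<Sum>u\<in>{u \<in> V. E v u}. \<sigma> u\<bar> \<le> (\<Sum>u\<in>{u \<in> V. E v u}. \<bar>\<sigma> u\<bar>)"
    by (rule sum_abs)
  also have "\<dots> = (\<Sum>u\<in>{u \<in> V. E v u}. 1)"
    by (intro sum.cong) (auto dest: spins_values[OF assms(2)])
  also have "\<dots> = real (degree V E v)"
    by (simp add: degree_def)
  also have "\<dots> \<le> real \<Delta>"
    using assms(1,3) by (simp add: max_degree_le_def)
  finally show ?thesis .
qed

lemma ising_weight_pos: "lam > 0 \<Longrightarrow> ising_weight V E \<beta> lam \<sigma> > 0"
  unfolding ising_weight_def by simp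

lemma partition_fn_pos:
  assumes "finite V" and "lam > 0"
  shows "partition_fn V E \<beta> lam > 0"
  unfolding partition_fn_def
  using finite_spins[OF assms(1)] restrict_one_in_spins ising_weight_pos[OF assms(2)]
  by (metis empty_iff sum_pos)

lemma ising_weight_flip_ge:
  assumes G: "simple_graph V E" and md: "max_degree_le V E \<Delta>" and v: "v \<in> V"
    and \<sigma>: "\<sigma> \<in> spins V" "\<sigma> v = 1" and "\<beta> \<ge> 0" and "lam > 0"
  shows "lam\<^sup>2 * exp (- \<beta> * real \<Delta>) * ising_weight V E \<beta> lam (\<sigma>(v := -1))
       \<le> ising_weight V E \<beta> lam \<sigma>"
proof -
  define s where "s = (\<Sum>u\<in>{u \<in> V. E v u}. \<sigma> u)"
  have fin: "finite V" using G by (simp add: simple_graph_def)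
  have \<sigma>_upd: "\<sigma>(v := 1) = \<sigma>" using \<sigma>(2) by auto
  have edge: "edge_sum V E \<sigma> = edge_sum V E (\<sigma>(v := -1)) + 2 * s"
    using edge_sum_fun_upd_diff[OF G v, of \<sigma> 1 "-1"] unfolding \<sigma>_upd s_def by simp
  have mag: "magnetization V \<sigma> = magnetization V (\<sigma>(v := -1)) + 2"
    using magnetization_fun_upd_diff[OF fin v, of \<sigma> 1 "-1"] unfolding \<sigma>_upd by simp
  have "- real \<Delta> \<le> s"
    using abs_sum_neighbour_spins_le[OF md \<sigma>(1) v] unfolding s_def by linarith
  then have "- \<beta> * real \<Delta> \<le> \<beta> * s"
    using mult_left_mono[OF _ \<open>\<beta> \<ge> 0\<close>] by fastforce
  then have "lam\<^sup>2 * exp (- \<beta> * real \<Delta>) * ising_weight V E \<beta> lam (\<sigma>(v := -1))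
      \<le> lam\<^sup>2 * exp (\<beta> * s) * ising_weight V E \<beta> lam (\<sigma>(v := -1))"
    using ising_weight_pos[OF \<open>lam > 0\<close>, THEN less_imp_le]
    by (intro mult_right_mono mult_left_mono) auto
  also have "\<dots> = ising_weight V E \<beta> lam \<sigma>"
    unfolding ising_weight_def edge mag using \<open>lam > 0\<close>
    by (simp add: powr_add exp_add distrib_left powr_numeral algebra_simps)
  finally show ?thesis .
qed

lemma spin_expectation_lower_bound:
  assumes G: "simple_graph V E" and md: "max_degree_le V E \<Delta>" and v: "v \<in> V"
    and "\<beta> \<ge> 0" and "lam > 0"
  defines "r \<equiv> lam\<^sup>2 * exp (- \<beta> * real \<Delta>)"
  shows "(r - 1) * partition_fn V E \<beta> lam
       \<le> (r + 1) * (\<Sum>\<sigma>\<in>spins V. \<sigma> v * ising_weight V E \<beta> lam \<sigma>)"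
  unfolding partition_fn_def
proof (rule sum_involution_pairing_le)
  fix \<sigma> assume \<sigma>: "\<sigma> \<in> spins V"
  show "\<sigma>(v := - \<sigma> v) \<in> spins V" by (rule spins_fun_upd_flip[OF \<sigma> v])
  show "(\<sigma>(v := - \<sigma> v))(v := - (\<sigma>(v := - \<sigma> v)) v) = \<sigma>" by simp
  show "\<sigma> v = 1 \<or> \<sigma> v = -1" by (rule spins_values[OF \<sigma> v])
  show "(\<sigma>(v := - \<sigma> v)) v = - \<sigma> v" by simp
  assume "\<sigma> v = 1"
  with ising_weight_flip_ge[OF G md v \<sigma> this assms(4,5)]
  show "r * ising_weight V E \<beta> lam (\<sigma>(v := - \<sigma> v)) \<le> ising_weight V E \<beta> lam \<sigma>"
    unfolding r_def by simp
qed

lemma sum_magnetization_weight: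
  "(\<Sum>\<sigma>\<in>S. magnetization V \<sigma> * w \<sigma>) = (\<Sum>v\<in>V. \<Sum>\<sigma>\<in>S. \<sigma> v * w \<sigma>)"
  unfolding magnetization_def by (simp add: sum_distrib_right sum.swap[of _ V])

lemma mean_magnetization_lower_bound:
  assumes G: "simple_graph V E" and "V \<noteq> {}" and md: "max_degree_le V E \<Delta>"
    and "\<beta> \<ge> 0" and "lam > 0"
  defines "r \<equiv> lam\<^sup>2 * exp (- \<beta> * real \<Delta>)"
  shows "r - 1 \<le> (r + 1) * mean_magnetization V E \<beta> lam"
proof -
  define Z where "Z = partition_fn V E \<beta> lam"
  define N where "N = real (card V)"
  have fin: "finite V" using G by (simp add: simple_graph_def)
  have "Z > 0" unfolding Z_def by (rule partition_fn_pos[OF fin \<open>lam > 0\<close>])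
  moreover have "N > 0" unfolding N_def using fin \<open>V \<noteq> {}\<close> by (simp add: card_gt_0_iff)
  moreover have "N * ((r - 1) * Z) \<le> N * ((r + 1) * Z * mean_magnetization V E \<beta> lam)"
  proof -
    have "N * ((r - 1) * Z) = (\<Sum>v\<in>V. (r - 1) * Z)" unfolding N_def by simp
    also have "\<dots> \<le> (\<Sum>v\<in>V. (r + 1) * (\<Sum>\<sigma>\<in>spins V. \<sigma> v * ising_weight V E \<beta> lam \<sigma>))"
      using spin_expectation_lower_bound[OF G md _ assms(4,5)]
      unfolding Z_def r_def by (intro sum_mono) blast
    also have "\<dots> = (r + 1) * (\<Sum>\<sigma>\<in>spins V. magnetization V \<sigma> * ising_weight V E \<beta> lam \<sigma>)"
      by (simp add: sum_magnetization_weight sum_distrib_left)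
    also have "\<dots> = N * ((r + 1) * Z * mean_magnetization V E \<beta> lam)"
      using \<open>Z > 0\<close> \<open>N > 0\<close> unfolding mean_magnetization_def Z_def N_def by simp
    finally show ?thesis .
  qed
  ultimately show ?thesis by (simp add: mult_le_cancel_left_pos)
qed

lemma sum_magnetization_weight_symmetrized:
  "2 * (\<Sum>\<sigma>\<in>spins V. magnetization V \<sigma> * ising_weight V E \<beta> lam \<sigma>)
   = (\<Sum>\<sigma>\<in>spins V. exp (\<beta> / 2 * edge_sum V E \<sigma>)
        * (magnetization V \<sigma> * (lam powr magnetization V \<sigma> - lam powr (- magnetization V \<sigma>))))"
proof -
  let ?neg = "\<lambda>\<sigma>::'a \<Rightarrow> real. restrict (\<lambda>u. - \<sigma> u) V"
  let ?X = "\<Sum>\<sigma>\<in>spins V. magnetization V \<sigma> * ising_weight V E \<beta> lam \<sigma>"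
  have "?X = (\<Sum>\<sigma>\<in>spins V. magnetization V (?neg \<sigma>) * ising_weight V E \<beta> lam (?neg \<sigma>))"
    by (rule sum_reindex_involution) (erule spins_restrict_uminus)+
  also have "\<dots> = (\<Sum>\<sigma>\<in>spins V. - magnetization V \<sigma> * (exp (\<beta> / 2 * edge_sum V E \<sigma>)
                                  * lam powr (- magnetization V \<sigma>)))"
    unfolding ising_weight_def edge_sum_restrict_uminus magnetization_restrict_uminus ..
  finally have flipped: "?X = (\<Sum>\<sigma>\<in>spins V. - magnetization V \<sigma>
      * (exp (\<beta> / 2 * edge_sum V E \<sigma>) * lam powr (- magnetization V \<sigma>)))" .
  have "2 * ?X = ?X + (\<Sum>\<sigma>\<in>spins V. - magnetization V \<sigma>
      * (exp (\<beta> / 2 * edge_sum V E \<sigma>) * lam powr (- magnetization V \<sigma>)))"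
    using flipped by simp
  then show ?thesis
    unfolding ising_weight_def by (simp add: sum.distrib[symmetric] algebra_simps)
qed

lemma mean_magnetization_neg:
  assumes G: "simple_graph V E" and "V \<noteq> {}" and "0 < lam" and "lam < 1"
  shows "mean_magnetization V E \<beta> lam < 0"
proof -
  define T where "T = (\<lambda>\<sigma>. exp (\<beta> / 2 * edge_sum V E \<sigma>)
      * (magnetization V \<sigma> * (lam powr magnetization V \<sigma> - lam powr (- magnetization V \<sigma>))))"
  have fin: "finite V" using G by (simp add: simple_graph_def)
  have card_pos: "card V > 0" using fin \<open>V \<noteq> {}\<close> by (simp add: card_gt_0_iff)
  have T_nonpos: "T \<sigma> \<le> 0" for \<sigma>
    using mult_powr_diff_neg[OF \<open>0 < lam\<close> \<open>lam < 1\<close>, of "magnetization V \<sigma>"]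
    unfolding T_def by (cases "magnetization V \<sigma> = 0") (auto intro: mult_nonneg_nonpos)
  have "magnetization V (restrict (\<lambda>_. 1) V) = real (card V)"
    unfolding magnetization_def by simp
  then have "T (restrict (\<lambda>_. 1) V) < 0"
    using mult_powr_diff_neg[OF \<open>0 < lam\<close> \<open>lam < 1\<close>] card_pos
    unfolding T_def by (simp add: mult_pos_neg)
  then have "sum T (spins V) < 0"
    using sum_strict_mono_ex1[of "spins V" T "\<lambda>_. 0"] finite_spins[OF fin]
      restrict_one_in_spins T_nonpos by fastforce
  then have "(\<Sum>\<sigma>\<in>spins V. magnetization V \<sigma> * ising_weight V E \<beta> lam \<sigma>) < 0"
    using sum_magnetization_weight_symmetrized[of V E \<beta> lam] unfolding T_def by simp
  then show ?thesis
    using partition_fn_pos[OF fin \<open>0 < lam\<close>] card_pos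
    unfolding mean_magnetization_def by (simp add: divide_neg_pos)
qed

theorem lemma17:
  fixes V :: "'a set" and E :: "'a \<Rightarrow> 'a \<Rightarrow> bool" and \<Delta> :: nat
    and \<beta> \<eta> lam :: real
  assumes "simple_graph V E" and "V \<noteq> {}"
    and "\<Delta> \<ge> 1" and "max_degree_le V E \<Delta>"
    and "\<beta> \<ge> 0" and "0 \<le> \<eta>" and "\<eta> < 1"
    and "lam > 0" and "mean_magnetization V E \<beta> lam = \<eta>"
  shows "1 \<le> lam \<and> lam \<le> sqrt ((1 + \<eta>) / (1 - \<eta>)) * exp (\<beta> * real \<Delta> / 2)"
proof
  show "1 \<le> lam"
    using mean_magnetization_neg[OF assms(1,2,8), of \<beta>] assms(6,9) by (cases "lam < 1") auto
  define r where "r = lam\<^sup>2 * exp (- \<beta> * real \<Delta>)"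
  have "r - 1 \<le> (r + 1) * \<eta>"
    using mean_magnetization_lower_bound[OF assms(1,2,4,5,8)] assms(9) unfolding r_def by simp
  then have "lam\<^sup>2 * exp (- \<beta> * real \<Delta>) \<le> (1 + \<eta>) / (1 - \<eta>)"
    using \<open>\<eta> < 1\<close> unfolding r_def by (simp add: pos_le_divide_eq algebra_simps)
  then have "lam\<^sup>2 \<le> (sqrt ((1 + \<eta>) / (1 - \<eta>)) * exp (\<beta> * real \<Delta> / 2))\<^sup>2"
    using assms(6,7)
    by (simp add: power_mult_distrib exp_minus field_simps flip: exp_of_nat_mult exp_add)
  then show "lam \<le> sqrt ((1 + \<eta>) / (1 - \<eta>)) * exp (\<beta> * real \<Delta> / 2)"
    by (rule power2_le_imp_le) (use assms(6,7) in simp)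
qed

end
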